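(* Let $\mathbf{E}=(E_1,\dots,E_K)$ be fixed with $\sum_{i=1}^K E_i\le E_{max}$, $0\le E_i< E_i^b+\eta_iP_Bh_i$ for all $i$, and $\sum_{j=1}^K\alpha_jE_j>0$. Then, among all $\boldsymbol{\tau}=(\tau_0,\dots,\tau_K)$ satisfying $\sum_{i=0}^K\tau_i\le 1$, $\tau_i\ge 0$ ($i=0,\dots,K$), and $E_i\le E_i^b+\eta_iP_Bh_i\tau_0$ ($i=1,\dots,K$), the objective $\sum_{i=1}^K R_i(E_i,\tau_i)$ is maximized by $$\tau_0^*=\min\left[\left(\max_i\frac{E_i-E_i^b}{\eta_iP_Bh_i}\right)^{+},\,1\right],\qquad \tau_i^*=\frac{\alpha_iE_i(1-\tau_0^* )}{\sum_{j=1}^K\alpha_jE_j},\quad i=1,\dots,K,$$ where $(x)^+=\max(0,x)$.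
   Context: Fix an integer $K\ge 1$ and positive constants $E_{max}$, $P_B$, and, for $i=1,\dots,K$, $E_i^b\ge 0$, $\eta_i\in(0,1)$, $h_i>0$, $g_i>0$, $\Gamma>0$, $\sigma^2>0$. Let $\alpha_i = g_i/(\Gamma\sigma^2)$. For $E_i\ge 0$, $\tau_i\ge 0$ define $R_i(E_i,\tau_i)=\tau_i\log_2\!\left(1+\alpha_i E_i/\tau_i\right)$ for $\tau_i>0$ and $R_i(E_i,0)=0$. *)

theory Defs
  imports Complex_Main
begin

definition rate :: "real \<Rightarrow> real \<Rightarrow> real \<Rightarrow> real" where
  "rate a E t = (if t > 0 then t * log 2 (1 + a * E / t) else 0)"

definition pos_part :: "real \<Rightarrow> real" where
  "pos_part x = max 0 x"

end

theory Submission
  imports Defs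
begin

text \<open>Once \<open>\<tau>\<^sub>0\<close> is fixed, the remaining time \<open>T\<close> is shared among the users. Each rate
  \<open>\<tau> log(1 + x/\<tau>)\<close> is jointly concave in \<open>(x, \<tau>)\<close>, so it lies below its tangent plane at
  the point where \<open>x/\<tau> = c\<close>, with \<open>c = (\<Sum>x\<^sub>j)/T\<close>; summing the tangent bounds and using
  \<open>c/(1+c) \<le> ln(1+c)\<close> shows that no allocation beats \<open>T log(1 + c)\<close>, which the
  allocation \<open>\<tau>\<^sub>i = x\<^sub>i/c\<close> attains. Since the rates do not depend on \<open>\<tau>\<^sub>0\<close> except through the
  budget, \<open>\<tau>\<^sub>0\<close> is chosen as small as the energy constraints allow.\<close>

lemma ln_le_tangent:
  fixes y z :: real
  assumes "0 < y" "0 < z"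
  shows "ln y \<le> ln z + (y - z) / z"
proof -
  have "ln (y / z) \<le> y / z - 1"
    using assms by (intro ln_le_minus_one) simp
  with assms show ?thesis
    by (simp add: ln_divide_pos diff_divide_distrib)
qed

lemma rate_le_tangent:
  fixes a e t c :: real
  assumes "0 \<le> a * e" "0 \<le> t" "0 < c"
  shows "rate a e t \<le> (t * ln (1 + c) + (a * e - t * c) / (1 + c)) / ln 2"
proof (cases "t > 0")
  case True
  have "0 \<le> a * e / t"
    using assms(1) True by simp
  then have "ln (1 + a * e / t) \<le> ln (1 + c) + (1 + a * e / t - (1 + c)) / (1 + c)"
    using assms(3) by (intro ln_le_tangent) auto
  then have "t * ln (1 + a * e / t) \<le> t * (ln (1 + c) + (1 + a * e / t - (1 + c)) / (1 + c))"
    using True by (intro mult_left_mono) auto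
  also have "\<dots> = t * ln (1 + c) + t * ((a * e - t * c) / t) / (1 + c)"
    using True assms(3) by (simp add: field_simps)
  also have "\<dots> = t * ln (1 + c) + (a * e - t * c) / (1 + c)"
    using True by simp
  finally have "t * ln (1 + a * e / t) \<le> t * ln (1 + c) + (a * e - t * c) / (1 + c)" .
  with True show ?thesis
    by (simp add: rate_def log_def divide_right_mono)
next
  case False
  with assms show ?thesis
    by (simp add: rate_def ln_ge_zero)
qed

lemma rate_proportional:
  fixes a e c :: real
  assumes "0 \<le> a * e" "0 < c"
  shows "rate a e (a * e / c) = a * e / c * log 2 (1 + c)"
proof (cases "a * e = 0")
  case False
  with assms have "0 < a * e / c"
    by (simp add: less_le)
  with assms show ?thesis
    by (simp add: rate_def)
qed (simp add: rate_def)

lemma divide_le_ln_one_plus: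
  fixes c :: real
  assumes "0 < c"
  shows "c / (1 + c) \<le> ln (1 + c)"
  using ln_le_tangent[of 1 "1 + c"] assms by (simp add: diff_divide_distrib)

lemma sum_rate_le:
  fixes a e \<tau> :: "'i \<Rightarrow> real" and T :: real
  assumes "finite I"
    and nonneg: "\<forall>i\<in>I. 0 \<le> a i * e i" "\<forall>i\<in>I. 0 \<le> \<tau> i"
    and budget: "sum \<tau> I \<le> T"
    and pos: "0 < (\<Sum>i\<in>I. a i * e i)" "0 < T"
  shows "(\<Sum>i\<in>I. rate (a i) (e i) (\<tau> i)) \<le> T * log 2 (1 + (\<Sum>i\<in>I. a i * e i) / T)"
proof -
  define S where "S = (\<Sum>i\<in>I. a i * e i)"
  define c where "c = S / T"
  have c: "0 < c" "S = c * T"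
    using pos unfolding S_def c_def by auto
  have "(\<Sum>i\<in>I. rate (a i) (e i) (\<tau> i))
      \<le> (\<Sum>i\<in>I. (\<tau> i * ln (1 + c) + (a i * e i - \<tau> i * c) / (1 + c)) / ln 2)"
    using nonneg c(1) by (intro sum_mono rate_le_tangent) auto
  also have "\<dots> = (sum \<tau> I * ln (1 + c) + (S - sum \<tau> I * c) / (1 + c)) / ln 2"
    unfolding S_def
    by (simp add: sum_divide_distrib[symmetric] sum.distrib sum_distrib_right
        sum_subtractf add_divide_distrib diff_divide_distrib)
  also have "\<dots> = (T * ln (1 + c) - (T - sum \<tau> I) * (ln (1 + c) - c / (1 + c))) / ln 2"
    using c by (simp add: field_simps)
  also have "\<dots> \<le> T * ln (1 + c) / ln 2"
    using budget divide_le_ln_one_plus[OF c(1)] by (intro divide_right_mono) auto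
  finally show ?thesis
    by (simp add: S_def c_def log_def)
qed

lemma sum_rate_proportional:
  fixes a e :: "'i \<Rightarrow> real" and T :: real
  assumes "finite I"
    and nonneg: "\<forall>i\<in>I. 0 \<le> a i * e i"
    and pos: "0 < (\<Sum>i\<in>I. a i * e i)" "0 < T"
  shows "(\<Sum>i\<in>I. rate (a i) (e i) (a i * e i * T / (\<Sum>j\<in>I. a j * e j)))
    = T * log 2 (1 + (\<Sum>i\<in>I. a i * e i) / T)"
proof -
  define S where "S = (\<Sum>i\<in>I. a i * e i)"
  have "(\<Sum>i\<in>I. rate (a i) (e i) (a i * e i * T / S))
      = (\<Sum>i\<in>I. a i * e i / (S / T) * log 2 (1 + S / T))"
  proof (intro sum.cong refl)
    fix i assume "i \<in> I"
    then have "rate (a i) (e i) (a i * e i / (S / T)) = a i * e i / (S / T) * log 2 (1 + S / T)"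
      using nonneg pos unfolding S_def[symmetric] by (intro rate_proportional) auto
    then show "rate (a i) (e i) (a i * e i * T / S) = a i * e i / (S / T) * log 2 (1 + S / T)"
      by simp
  qed
  also have "\<dots> = T * log 2 (1 + S / T)"
    using pos unfolding S_def by (simp add: sum_distrib_right[symmetric] sum_divide_distrib[symmetric])
  finally show ?thesis
    by (simp add: S_def)
qed

lemma all_le_affine_iff_Max_le:
  fixes e b c :: "'i \<Rightarrow> real"
  assumes "finite I" "I \<noteq> {}" "\<forall>i\<in>I. 0 < c i"
  shows "(\<forall>i\<in>I. e i \<le> b i + c i * t) \<longleftrightarrow> Max ((\<lambda>i. (e i - b i) / c i) ` I) \<le> t"
  using assms by (auto simp: pos_divide_le_eq algebra_simps)

lemma least_energy_time:
  fixes e b c :: "'i \<Rightarrow> real"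
  assumes "finite I" "I \<noteq> {}" "\<forall>i\<in>I. 0 < c i" "\<forall>i\<in>I. e i < b i + c i"
  defines "t\<^sub>0 \<equiv> min (pos_part (Max ((\<lambda>i. (e i - b i) / c i) ` I))) 1"
  shows "0 \<le> t\<^sub>0" "t\<^sub>0 < 1" "\<forall>i\<in>I. e i \<le> b i + c i * t\<^sub>0"
    and "\<And>t. 0 \<le> t \<Longrightarrow> \<forall>i\<in>I. e i \<le> b i + c i * t \<Longrightarrow> t\<^sub>0 \<le> t"
proof -
  define M where "M = Max ((\<lambda>i. (e i - b i) / c i) ` I)"
  have "M < 1"
    using assms(1-4) by (auto simp: M_def pos_divide_less_eq)
  then have "t\<^sub>0 = max 0 M"
    by (simp add: t\<^sub>0_def M_def pos_part_def)
  with \<open>M < 1\<close> all_le_affine_iff_Max_le[OF assms(1-3)] show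
    "0 \<le> t\<^sub>0" "t\<^sub>0 < 1" "\<forall>i\<in>I. e i \<le> b i + c i * t\<^sub>0"
    "\<And>t. 0 \<le> t \<Longrightarrow> \<forall>i\<in>I. e i \<le> b i + c i * t \<Longrightarrow> t\<^sub>0 \<le> t"
    by (auto simp: M_def)
qed

theorem theorem2:
  fixes K :: nat and Emax PB Gamma sigma2 :: real
    and Eb eta h g E :: "nat \<Rightarrow> real"
  assumes K: "K \<ge> 1"
    and Emax: "Emax > 0" and PB: "PB > 0" and Gamma: "Gamma > 0" and sigma2: "sigma2 > 0"
    and Eb: "\<forall>i\<in>{1..K}. Eb i \<ge> 0"
    and eta: "\<forall>i\<in>{1..K}. 0 < eta i \<and> eta i < 1"
    and h: "\<forall>i\<in>{1..K}. h i > 0"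
    and g: "\<forall>i\<in>{1..K}. g i > 0"
    and Esum: "(\<Sum>i=1..K. E i) \<le> Emax"
    and Ebnd: "\<forall>i\<in>{1..K}. 0 \<le> E i \<and> E i < Eb i + eta i * PB * h i"
    and Epos: "(\<Sum>j=1..K. g j / (Gamma * sigma2) * E j) > 0"
  defines "tau0s \<equiv> min (pos_part (Max ((\<lambda>i. (E i - Eb i) / (eta i * PB * h i)) ` {1..K}))) 1"
    and "feasible \<equiv> (\<lambda>tau :: nat \<Rightarrow> real. (\<Sum>i=0..K. tau i) \<le> 1 \<and> (\<forall>i\<in>{0..K}. tau i \<ge> 0)
           \<and> (\<forall>i\<in>{1..K}. E i \<le> Eb i + eta i * PB * h i * tau 0))"
    and "obj \<equiv> (\<lambda>tau :: nat \<Rightarrow> real. \<Sum>i=1..K. rate (g i / (Gamma * sigma2)) (E i) (tau i))"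
  shows "let taus = (\<lambda>i. if i = 0 then tau0s else
           g i / (Gamma * sigma2) * E i * (1 - tau0s) / (\<Sum>j=1..K. g j / (Gamma * sigma2) * E j))
         in feasible taus \<and> (\<forall>tau. feasible tau \<longrightarrow> obj tau \<le> obj taus)"
proof -
  define a where "a i = g i / (Gamma * sigma2)" for i
  define S where "S = (\<Sum>j=1..K. a j * E j)"
  define T where "T = 1 - tau0s"
  define taus where "taus i = (if i = 0 then tau0s else a i * E i * T / S)" for i
  have I: "finite {1..K}" "{1..K} \<noteq> {}"
    using K by auto
  have nonneg: "\<forall>i\<in>{1..K}. 0 \<le> a i * E i"
    using g Ebnd Gamma sigma2 by (simp add: a_def less_imp_le)
  have "0 < S"
    using Epos by (simp add: S_def a_def)
  note tau0s = least_energy_time[of "{1..K}" "\<lambda>i. eta i * PB * h i" E Eb, folded tau0s_def]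
  have "0 \<le> tau0s" "0 < T" and tau0s_energy: "\<forall>i\<in>{1..K}. E i \<le> Eb i + eta i * PB * h i * tau0s"
    and tau0s_least: "\<And>t. 0 \<le> t \<Longrightarrow> \<forall>i\<in>{1..K}. E i \<le> Eb i + eta i * PB * h i * t \<Longrightarrow> tau0s \<le> t"
    using tau0s I eta h PB Ebnd by (simp_all add: T_def)
  have split: "(\<Sum>i=0..K. f i) = f 0 + (\<Sum>i=1..K. f i)" for f :: "nat \<Rightarrow> real"
    by (simp add: sum.atLeast_Suc_atMost)
  have "(\<Sum>i=1..K. taus i) = (\<Sum>i=1..K. a i * E i) * T / S"
    by (simp add: taus_def sum_divide_distrib[symmetric] sum_distrib_right[symmetric])
  then have "(\<Sum>i=0..K. taus i) = 1"
    using split[of taus] \<open>0 < S\<close> by (simp add: taus_def S_def T_def)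
  moreover have "\<forall>i\<in>{0..K}. 0 \<le> taus i"
    using nonneg \<open>0 \<le> tau0s\<close> \<open>0 < S\<close> \<open>0 < T\<close> by (simp add: taus_def)
  ultimately have "feasible taus"
    using tau0s_energy by (simp add: feasible_def taus_def)
  moreover have "obj tau \<le> obj taus" if "feasible tau" for tau
  proof -
    have "tau0s \<le> tau 0" and tau_nonneg: "\<forall>i\<in>{1..K}. 0 \<le> tau i"
      using that tau0s_least by (auto simp: feasible_def)
    then have "(\<Sum>i=1..K. tau i) \<le> T"
      using that split[of tau] by (simp add: feasible_def T_def)
    then have "obj tau \<le> T * log 2 (1 + S / T)"
      unfolding obj_def S_def a_def[symmetric]
      using I(1) nonneg tau_nonneg \<open>0 < S\<close> \<open>0 < T\<close> by (intro sum_rate_le) (auto simp: S_def)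
    also have "\<dots> = obj taus"
      unfolding obj_def S_def a_def[symmetric]
      using sum_rate_proportional[OF I(1) nonneg, of T] \<open>0 < S\<close> \<open>0 < T\<close> by (simp add: taus_def S_def)
    finally show ?thesis .
  qed
  ultimately show ?thesis
    unfolding Let_def taus_def a_def S_def T_def by blast
qed

end
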